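(* Let $K\subseteq\mathbb{R}^n$ be a proper cone and $A\in\mathbb{R}^{n\times n}$ nonsingular. Let $A=U-V$ be a convergent $K$-regular splitting and let $U=F-G$ be a convergent $K$-weak regular splitting of type II such that $VF^{-1}G=GF^{-1}V$. Then the stationary two-stage iterative method is convergent for any initial vector $x_0$; that is, for every positive integer $s$, the iteration matrix $$T_{s}=(F^{-1}G)^{s}+\sum_{j=0}^{s-1}(F^{-1}G)^{j}F^{-1}V$$ satisfies $\rho(T_s)<1$, so that the iterates $x_{k+1}=T_s x_k + \sum_{j=0}^{s-1}(F^{-1}G)^jF^{-1}b$ converge to $A^{-1}b$ for every $x_0$ and every $b$.
   Context: A proper cone $K\subseteq\mathbb{R}^n$ is a closed, convex, pointed ($K\cap(-K)=\{0\}$), solid (nonempty interior) cone. For $M\in\mathbb{R}^{n\times n}$, $M\geq_K 0$ means $MK\subseteq K$, and $M\geq_K N$ means $M-N\geq_K 0$. A splitting $A=U-V$ (with $U$ nonsingular) is $K$-regular if $U^{-1}\geq_K 0$ and $V\geq_K 0$; it is a $K$-weak regular splitting of type I if $U^{-1}\geq_K0$ and $U^{-1}V\geq_K 0$, and of type II if $U^{-1}\geq_K 0$ and $VU^{-1}\geq_K 0$. A splitting $A=U-V$ is convergent if $\rho(U^{-1}V)<1$, where $\rho$ denotes spectral radius. The stationary two-stage iterative method for $Ax=b$ uses the outer splitting $A=U-V$ and inner splitting $U=F-G$ with a fixed number $s\ge 1$ of inner iterations. *)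

theory Defs
  imports "HOL-Analysis.Analysis"
begin

definition proper_cone :: "(real^'n) set \<Rightarrow> bool" where
  "proper_cone K \<longleftrightarrow> cone K \<and> convex K \<and> closed K \<and>
     K \<inter> uminus ` K = {0} \<and> interior K \<noteq> {}"

definition K_nonneg :: "(real^'n) set \<Rightarrow> real^'n^'n \<Rightarrow> bool" where
  "K_nonneg K M \<longleftrightarrow> (\<forall>x\<in>K. M *v x \<in> K)"

definition K_regular_splitting :: "(real^'n) set \<Rightarrow> real^'n^'n \<Rightarrow> real^'n^'n \<Rightarrow> real^'n^'n \<Rightarrow> bool" where
  "K_regular_splitting K A U V \<longleftrightarrow> A = U - V \<and> invertible U \<and>
     K_nonneg K (matrix_inv U) \<and> K_nonneg K V"

definition K_weak_regular_splitting_II :: "(real^'n) set \<Rightarrow> real^'n^'n \<Rightarrow> real^'n^'n \<Rightarrow> real^'n^'n \<Rightarrow> bool" where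
  "K_weak_regular_splitting_II K A U V \<longleftrightarrow> A = U - V \<and> invertible U \<and>
     K_nonneg K (matrix_inv U) \<and> K_nonneg K (V ** matrix_inv U)"

definition matpow :: "real^'n^'n \<Rightarrow> nat \<Rightarrow> real^'n^'n" where
  "matpow M k = ((\<lambda>X. M ** X) ^^ k) (mat 1)"

definition complexify :: "real^'n^'n \<Rightarrow> complex^'n^'n" where
  "complexify M = (\<chi> i j. complex_of_real (M $ i $ j))"

definition complex_eigenvalue :: "real^'n^'n \<Rightarrow> complex \<Rightarrow> bool" where
  "complex_eigenvalue M l \<longleftrightarrow> (\<exists>v. v \<noteq> 0 \<and> complexify M *v v = l *s v)"

definition spectral_radius :: "real^'n^'n \<Rightarrow> real" where
  "spectral_radius M = Max {cmod l | l. complex_eigenvalue M l}"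

definition convergent_splitting :: "real^'n^'n \<Rightarrow> real^'n^'n \<Rightarrow> bool" where
  "convergent_splitting U V \<longleftrightarrow> spectral_radius (matrix_inv U ** V) < 1"

definition two_stage_T :: "real^'n^'n \<Rightarrow> real^'n^'n \<Rightarrow> real^'n^'n \<Rightarrow> nat \<Rightarrow> real^'n^'n" where
  "two_stage_T F G V s = matpow (matrix_inv F ** G) s +
     (\<Sum>j<s. matpow (matrix_inv F ** G) j ** matrix_inv F ** V)"

definition two_stage_c :: "real^'n^'n \<Rightarrow> real^'n^'n \<Rightarrow> nat \<Rightarrow> real^'n \<Rightarrow> real^'n" where
  "two_stage_c F G s b = (\<Sum>j<s. (matpow (matrix_inv F ** G) j ** matrix_inv F) *v b)"

definition two_stage_iter :: "real^'n^'n \<Rightarrow> real^'n^'n \<Rightarrow> real^'n^'n \<Rightarrow> nat \<Rightarrow> real^'n \<Rightarrow> real^'n \<Rightarrow> nat \<Rightarrow> real^'n" where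
  "two_stage_iter F G V s b x0 k =
     ((\<lambda>x. two_stage_T F G V s *v x + two_stage_c F G s b) ^^ k) x0"

end

(* With R = sum_{j<s} (F^-1 G)^j F^-1, the iteration matrix is T_s = I - R A, the iteration
   matrix of the splitting A = R^-1 - (R^-1 - A).  Since (R^-1 - A) R = I - A R = (G F^-1)^s + V R,
   this splitting is K-weak regular of type II, and A^-1 is K-nonnegative because A = U - V is a
   convergent K-regular splitting (Neumann series).  Such a splitting is convergent: for x in K the
   vectors R (I - A R)^k x = (I - R A)^k R x lie in K and their partial sums are bounded by A^-1 x
   in the order of K, so a linear functional that is coercive on K forces them to 0; K being
   generating, (I - R A)^k y -> 0 for every y.  Spectral radius and decay of powers are related
   through the Jordan normal form of the complexified matrix. *)

theory Submission
  imports Defs "Jordan_Normal_Form.Spectral_Radius"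
begin

hide_const (open) Matrix.mat Matrix.vec Spectral_Radius.spectral_radius
no_notation Matrix.vec_index (infixl \<open>$\<close> 100)

section \<open>Matrix algebra\<close>

lemma matrix_inv_left_right:
  assumes "invertible (A :: 'a::semiring_1^'n^'m)"
  shows "A ** matrix_inv A = mat 1" "matrix_inv A ** A = mat 1"
  using someI_ex[OF assms[unfolded invertible_def]] unfolding matrix_inv_def by auto

lemma matrix_inv_unique:
  fixes A B :: "'a::field^'n^'n"
  assumes "A ** B = mat 1"
  shows "matrix_inv A = B"
proof -
  have "invertible A" using assms invertible_right_inverse by blast
  then show ?thesis
    by (metis assms matrix_inv_left_right(2) matrix_mul_assoc matrix_mul_lid matrix_mul_rid)
qed

lemma invertible_matrix_inv: "invertible A \<Longrightarrow> invertible (matrix_inv (A :: 'a::semiring_1^'n^'m))"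
  using matrix_inv_left_right unfolding invertible_def by blast

lemma matrix_inv_matrix_inv: "invertible A \<Longrightarrow> matrix_inv (matrix_inv (A :: 'a::field^'n^'n)) = A"
  by (rule matrix_inv_unique) (rule matrix_inv_left_right)

lemma matrix_add_rdistrib: "((A :: 'a::semiring_1^'n^'m) + B) ** C = A ** C + B ** C"
  by (simp add: matrix_matrix_mult_def Finite_Cartesian_Product.vec_eq_iff distrib_right sum.distrib)

lemma matrix_diff_rdistrib: "((A :: 'a::ring_1^'n^'m) - B) ** C = A ** C - B ** C"
  by (simp add: matrix_matrix_mult_def Finite_Cartesian_Product.vec_eq_iff left_diff_distrib sum_subtractf)

lemma matrix_diff_ldistrib: "(A :: 'a::ring_1^'n^'m) ** (B - C) = A ** B - A ** C"
  by (simp add: matrix_matrix_mult_def Finite_Cartesian_Product.vec_eq_iff right_diff_distrib sum_subtractf)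

lemma sum_matrix_mult: "(\<Sum>j\<in>S. f j) ** (C :: 'a::semiring_1^'p^'n) = (\<Sum>j\<in>S. f j ** C)"
  by (induction S rule: infinite_finite_induct) (simp_all add: matrix_add_rdistrib)

lemma matrix_mult_sum: "(C :: 'a::semiring_1^'n^'m) ** (\<Sum>j\<in>S. f j) = (\<Sum>j\<in>S. C ** f j)"
  by (induction S rule: infinite_finite_induct) (simp_all add: matrix_add_ldistrib)

lemma sum_matrix_vector_mult: "(\<Sum>j\<in>S. f j) *v (x :: 'a::semiring_1^'n) = (\<Sum>j\<in>S. f j *v x)"
  by (induction S rule: infinite_finite_induct) (simp_all add: matrix_vector_mult_add_rdistrib)

lemma matpow_0 [simp]: "matpow M 0 = mat 1"
  by (simp add: matpow_def)

lemma matpow_Suc: "matpow M (Suc k) = M ** matpow M k"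
  by (simp add: matpow_def)

lemma matpow_Suc': "matpow M (Suc k) = matpow M k ** M"
  by (induction k) (simp_all add: matpow_Suc matrix_mul_assoc)

lemma matpow_add: "matpow M (a + b) = matpow M a ** matpow M b"
  by (induction a) (simp_all add: matpow_Suc matrix_mul_assoc)

lemma matpow_scaleR: "matpow (c *\<^sub>R M) k = c ^ k *\<^sub>R matpow M k"
  by (induction k) (simp_all add: matpow_Suc scalar_matrix_assoc matrix_scalar_ac mult.commute)

lemma matpow_mult_shift: "matpow (X ** Y) k ** X = X ** matpow (Y ** X) k"
  by (induction k) (simp_all add: matpow_Suc matrix_mul_assoc[symmetric])

lemma one_minus_mult_geometric_sum:
  "(mat 1 - H) ** (\<Sum>k<m. matpow H k) = mat 1 - matpow H m"
proof -
  have "(mat 1 - H) ** (\<Sum>k<m. matpow H k) = (\<Sum>k<m. matpow H k - matpow H (Suc k))"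
    by (simp add: matrix_mult_sum matrix_diff_rdistrib matpow_Suc)
  then show ?thesis by (simp add: sum_lessThan_telescope')
qed

section \<open>Spectral radius via Jordan normal forms\<close>

definition cart_index :: "nat \<Rightarrow> 'n::finite" where
  "cart_index = (SOME f. bij_betw f {0..<CARD('n)} UNIV)"

lemma bij_cart_index: "bij_betw (cart_index :: nat \<Rightarrow> 'n::finite) {0..<CARD('n)} UNIV"
  using someI_ex[OF ex_bij_betw_nat_finite[of "UNIV :: 'n set"]] by (simp add: cart_index_def)

lemma sum_cart_index: "(\<Sum>k = 0..<CARD('n). g (cart_index k :: 'n::finite)) = (\<Sum>i\<in>UNIV. g i)"
  using sum.reindex_bij_betw[OF bij_cart_index] .

lemma cart_index_surj: obtains k where "k < CARD('n)" "cart_index k = (i :: 'n::finite)"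
  using bij_betw_imp_surj_on[OF bij_cart_index[where 'n = 'n]] by (metis atLeastLessThan_iff imageE UNIV_I)

definition from_hma_mat :: "'a^'n^'n \<Rightarrow> 'a mat" where
  "from_hma_mat M = Matrix.mat CARD('n) CARD('n) (\<lambda>(i, j). M $ cart_index i $ cart_index j)"

definition from_hma_vec :: "'a^'n \<Rightarrow> 'a Matrix.vec" where
  "from_hma_vec v = Matrix.vec CARD('n) (\<lambda>i. v $ cart_index i)"

lemma from_hma_mat_carrier: "from_hma_mat (M :: 'a^'n^'n) \<in> carrier_mat CARD('n) CARD('n)"
  by (simp add: from_hma_mat_def)

lemma dim_from_hma_mat [simp]:
  "dim_row (from_hma_mat (M :: 'a^'n^'n)) = CARD('n)" "dim_col (from_hma_mat M) = CARD('n)"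
  by (simp_all add: from_hma_mat_def)

lemma from_hma_vec_carrier: "from_hma_vec (v :: 'a^'n) \<in> carrier_vec CARD('n)"
  by (simp add: from_hma_vec_def)

lemma from_hma_mat_mult:
  "from_hma_mat (A ** B) = from_hma_mat A * from_hma_mat (B :: 'a::comm_ring_1^'n^'n)"
  by (rule eq_matI)
    (auto simp: from_hma_mat_def matrix_matrix_mult_def scalar_prod_def sum_cart_index
      [of "\<lambda>k. A $ cart_index _ $ k * B $ k $ cart_index _"])

lemma from_hma_mat_one: "from_hma_mat (mat 1 :: 'a::comm_ring_1^'n^'n) = 1\<^sub>m CARD('n)"
proof -
  have "cart_index i = (cart_index j :: 'n) \<longleftrightarrow> i = j" if "i < CARD('n)" "j < CARD('n)" for i j
    using bij_betw_imp_inj_on[OF bij_cart_index[where 'n = 'n]] that by (auto dest: inj_onD)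
  then show ?thesis
    by (intro eq_matI) (simp_all add: from_hma_mat_def Finite_Cartesian_Product.mat_def)
qed

lemma from_hma_mult_vec:
  "from_hma_mat M *\<^sub>v from_hma_vec v = from_hma_vec (M *v (v :: 'a::comm_ring_1^'n))"
  by (rule eq_vecI)
    (auto simp: from_hma_mat_def from_hma_vec_def matrix_vector_mult_def scalar_prod_def
      sum_cart_index[of "\<lambda>k. M $ cart_index _ $ k * v $ k"])

lemma from_hma_vec_smult: "from_hma_vec (l *s v) = l \<cdot>\<^sub>v from_hma_vec (v :: 'a::comm_ring_1^'n)"
  by (rule eq_vecI) (simp_all add: from_hma_vec_def)

lemma from_hma_vec_zero: "from_hma_vec (0 :: 'a::zero^'n) = 0\<^sub>v CARD('n)"
  by (rule eq_vecI) (simp_all add: from_hma_vec_def)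

lemma from_hma_vec_inject: "from_hma_vec v = from_hma_vec w \<longleftrightarrow> v = (w :: 'a^'n)"
proof
  assume eq: "from_hma_vec v = from_hma_vec w"
  show "v = w"
  proof (rule Finite_Cartesian_Product.vec_eq_iff[THEN iffD2], rule allI)
    fix i :: 'n
    obtain k where "k < CARD('n)" "cart_index k = i" by (rule cart_index_surj)
    then show "v $ i = w $ i"
      using arg_cong[OF eq, of "\<lambda>u. vec_index u k"] by (simp add: from_hma_vec_def)
  qed
qed simp

lemma from_hma_vec_surj:
  assumes "u \<in> carrier_vec CARD('n)"
  obtains v :: "'a^'n" where "from_hma_vec v = u"
proof
  let ?pos = "inv_into {0..<CARD('n)} (cart_index :: nat \<Rightarrow> 'n)"
  have "?pos (cart_index k) = k" if "k < CARD('n)" for k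
    using bij_betw_imp_inj_on[OF bij_cart_index[where 'n = 'n]] that by (simp add: inv_into_f_f)
  with assms show "from_hma_vec (\<chi> i. vec_index u (?pos i)) = u"
    by (intro eq_vecI) (simp_all add: from_hma_vec_def)
qed

lemma eigenvalue_from_hma_mat:
  "eigenvalue (from_hma_mat M) l \<longleftrightarrow> (\<exists>v. v \<noteq> 0 \<and> M *v v = l *s (v :: 'a::field^'n))"
proof -
  have "eigenvalue (from_hma_mat M) l \<longleftrightarrow> (\<exists>u \<in> carrier_vec CARD('n).
      u \<noteq> 0\<^sub>v CARD('n) \<and> from_hma_mat M *\<^sub>v u = l \<cdot>\<^sub>v u)"
    unfolding eigenvalue_def eigenvector_def by (simp add: from_hma_mat_def Bex_def)
  also have "\<dots> \<longleftrightarrow> (\<exists>v :: 'a^'n. from_hma_vec v \<noteq> 0\<^sub>v CARD('n) \<and>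
      from_hma_mat M *\<^sub>v from_hma_vec v = l \<cdot>\<^sub>v from_hma_vec v)"
  proof
    assume "\<exists>u \<in> carrier_vec CARD('n). u \<noteq> 0\<^sub>v CARD('n) \<and> from_hma_mat M *\<^sub>v u = l \<cdot>\<^sub>v u"
    then obtain u where "u \<in> carrier_vec CARD('n)" "u \<noteq> 0\<^sub>v CARD('n)"
      "from_hma_mat M *\<^sub>v u = l \<cdot>\<^sub>v u" by blast
    moreover from this(1) obtain v :: "'a^'n" where "from_hma_vec v = u" by (rule from_hma_vec_surj)
    ultimately show "\<exists>v :: 'a^'n. from_hma_vec v \<noteq> 0\<^sub>v CARD('n) \<and>
      from_hma_mat M *\<^sub>v from_hma_vec v = l \<cdot>\<^sub>v from_hma_vec v" by blast
  qed (use from_hma_vec_carrier in blast)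
  also have "\<dots> \<longleftrightarrow> (\<exists>v. v \<noteq> 0 \<and> M *v v = l *s v)"
    by (simp add: from_hma_mult_vec from_hma_vec_smult[symmetric] from_hma_vec_zero[symmetric]
        from_hma_vec_inject)
  finally show ?thesis .
qed

lemma complexify_mult: "complexify (A ** B) = complexify A ** complexify B"
  by (simp add: complexify_def matrix_matrix_mult_def Finite_Cartesian_Product.vec_eq_iff)

lemma complexify_one: "complexify (mat 1) = mat 1"
  by (simp add: complexify_def Finite_Cartesian_Product.mat_def Finite_Cartesian_Product.vec_eq_iff)

lemma complexify_scaleR_mult_vec: "complexify (c *\<^sub>R M) *v v = complex_of_real c *s (complexify M *v v)"
  by (simp add: complexify_def matrix_vector_mult_def Finite_Cartesian_Product.vec_eq_iff
      sum_distrib_left mult.assoc)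

lemma from_hma_complexify_matpow:
  "from_hma_mat (complexify (matpow M k)) = from_hma_mat (complexify M) ^\<^sub>m k"
  by (induction k) (simp_all add: complexify_one from_hma_mat_one matpow_Suc' complexify_mult
      from_hma_mat_mult)

lemma complex_eigenvalue_iff_spectrum:
  "complex_eigenvalue M l \<longleftrightarrow> l \<in> spectrum (from_hma_mat (complexify M))"
  by (simp add: complex_eigenvalue_def spectrum_def eigenvalue_from_hma_mat)

lemma spectral_radius_eq_jnf:
  "spectral_radius M = Spectral_Radius.spectral_radius (from_hma_mat (complexify M))"
  unfolding Defs.spectral_radius_def Spectral_Radius.spectral_radius_def complex_eigenvalue_iff_spectrum
  by (simp add: Setcompr_eq_image)

lemma spectral_radius_ge: "complex_eigenvalue M l \<Longrightarrow> cmod l \<le> spectral_radius M"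
  unfolding spectral_radius_eq_jnf complex_eigenvalue_iff_spectrum
  by (intro spectral_radius_mem_max(2)[OF from_hma_mat_carrier]) simp_all

lemma spectral_radius_attained:
  obtains l where "complex_eigenvalue M l" "cmod l = spectral_radius M"
  using spectral_radius_mem_max(1)[OF from_hma_mat_carrier[of "complexify M"]]
  unfolding spectral_radius_eq_jnf complex_eigenvalue_iff_spectrum by auto

lemma spectral_radius_nonneg: "0 \<le> spectral_radius M"
  by (metis spectral_radius_attained norm_ge_zero)

lemma complex_eigenvalue_scaleR:
  "complex_eigenvalue M l \<Longrightarrow> complex_eigenvalue (c *\<^sub>R M) (complex_of_real c * l)"
  unfolding complex_eigenvalue_def by (auto simp: complexify_scaleR_mult_vec)

lemma spectral_radius_scaleR:
  assumes "0 < c"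
  shows "spectral_radius (c *\<^sub>R M) = c * spectral_radius M"
proof -
  have le: "spectral_radius (d *\<^sub>R N) \<le> d * spectral_radius N" if "0 < d" for d N
  proof -
    obtain l where l: "complex_eigenvalue (d *\<^sub>R N) l" "cmod l = spectral_radius (d *\<^sub>R N)"
      by (rule spectral_radius_attained)
    have "complex_eigenvalue N (complex_of_real (1 / d) * l)"
      using complex_eigenvalue_scaleR[OF l(1), of "1 / d"] that by simp
    then have "cmod (complex_of_real (1 / d) * l) \<le> spectral_radius N"
      by (rule spectral_radius_ge)
    then have "cmod l / d \<le> spectral_radius N"
      using that by (simp add: norm_divide)
    then show ?thesis using l(2) that by (simp add: field_simps)
  qed
  have "spectral_radius M \<le> (1 / c) * spectral_radius (c *\<^sub>R M)"
    using le[of "1 / c" "c *\<^sub>R M"] assms by simp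
  with le[OF assms, of M] assms show ?thesis by (simp add: field_simps)
qed

lemma matpow_entries_bounded:
  fixes M :: "real^'n^'n"
  assumes "spectral_radius M < 1"
  shows "\<exists>C. \<forall>k i j. \<bar>matpow M k $ i $ j\<bar> \<le> C"
proof -
  obtain C where C: "\<And>k. norm_bound (from_hma_mat (complexify M) ^\<^sub>m k) C"
    using spectral_radius_jnf_norm_bound_less_1_upper_triangular[OF from_hma_mat_carrier]
      assms unfolding spectral_radius_eq_jnf by blast
  have "\<bar>matpow M k $ i $ j\<bar> \<le> C" for k i j
  proof -
    obtain a b where "a < CARD('n)" "cart_index a = i" "b < CARD('n)" "cart_index b = j"
      by (metis cart_index_surj)
    then show ?thesis
      using C[of k] unfolding norm_bound_def from_hma_complexify_matpow[symmetric]
      by (auto simp: from_hma_mat_def complexify_def)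
  qed
  then show ?thesis by blast
qed

lemma matpow_entries_decay:
  assumes "spectral_radius M < 1"
  shows "\<exists>C r. 0 < r \<and> r < 1 \<and> (\<forall>k i j. \<bar>matpow M k $ i $ j\<bar> \<le> C * r ^ k)"
proof -
  define r where "r = (spectral_radius M + 1) / 2"
  have r: "0 < r" "r < 1" "spectral_radius M < r"
    using spectral_radius_nonneg[of M] assms by (auto simp: r_def)
  have "spectral_radius ((1 / r) *\<^sub>R M) < 1"
    using r by (simp add: spectral_radius_scaleR)
  then obtain C where C: "\<And>k i j. \<bar>matpow ((1 / r) *\<^sub>R M) k $ i $ j\<bar> \<le> C"
    using matpow_entries_bounded by blast
  have bound: "\<bar>matpow M k $ i $ j\<bar> \<le> C * r ^ k" for k i j
  proof -
    have "matpow M k = r ^ k *\<^sub>R matpow ((1 / r) *\<^sub>R M) k"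
      using r by (simp add: matpow_scaleR power_one_over field_simps)
    then show ?thesis
      using mult_left_mono[OF C[of k i j], of "r ^ k"] r by (simp add: abs_mult mult.commute)
  qed
  with r show ?thesis by blast
qed

lemma complexify_matpow_eigenvector:
  "complexify M *v v = l *s v \<Longrightarrow> complexify (matpow M k) *v v = l ^ k *s v"
  by (induction k) (simp_all add: complexify_one matpow_Suc complexify_mult
      matrix_vector_mul_assoc[symmetric] vector_scalar_commute)

lemma power_tendsto_zero_imp_norm_less_one:
  fixes z :: "'a::real_normed_div_algebra"
  assumes "(\<lambda>k. z ^ k) \<longlonglongrightarrow> 0"
  shows "norm z < 1"
proof (rule ccontr)
  assume "\<not> norm z < 1"
  then have "\<forall>k. 1 \<le> norm (z ^ k)" by (simp add: norm_power one_le_power)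
  moreover have "(\<lambda>k. norm (z ^ k)) \<longlonglongrightarrow> 0" using assms by (rule tendsto_norm_zero)
  ultimately show False using LIMSEQ_le_const[of "\<lambda>k. norm (z ^ k)" 0 1] by auto
qed

lemma matpow_vec_tendsto_zero:
  assumes "spectral_radius M < 1"
  shows "(\<lambda>k. matpow M k *v x) \<longlonglongrightarrow> 0"
proof (rule vec_tendstoI)
  fix i
  obtain C r where r: "0 < r" "r < 1" and C: "\<And>k i j. \<bar>matpow M k $ i $ j\<bar> \<le> C * r ^ k"
    using matpow_entries_decay[OF assms] by blast
  have "(\<lambda>k. C * r ^ k) \<longlonglongrightarrow> 0"
    using r by (intro tendsto_mult_right_zero LIMSEQ_power_zero) simp
  then have entry: "(\<lambda>k. matpow M k $ i $ j) \<longlonglongrightarrow> 0" for j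
    by (rule Lim_null_comparison[rotated]) (simp add: C)
  have "(\<lambda>k. \<Sum>j\<in>UNIV. matpow M k $ i $ j * x $ j) \<longlonglongrightarrow> 0"
    by (intro tendsto_null_sum tendsto_mult_left_zero entry)
  then show "(\<lambda>k. (matpow M k *v x) $ i) \<longlonglongrightarrow> 0 $ i"
    by (simp add: matrix_vector_mult_def)
qed

lemma spectral_radius_less_oneI:
  assumes lim: "\<And>x. (\<lambda>k. matpow M k *v x) \<longlonglongrightarrow> 0"
  shows "spectral_radius M < 1"
proof -
  have entry: "(\<lambda>k. matpow M k $ j $ m) \<longlonglongrightarrow> 0" for j m
  proof -
    have "(\<lambda>k. (matpow M k *v axis m 1) $ j) \<longlonglongrightarrow> 0 $ j"
      using lim by (rule tendsto_vec_nth)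
    moreover have "(matpow M k *v axis m 1) $ j = matpow M k $ j $ m" for k
      by (simp add: matrix_vector_mult_def axis_def if_distrib cong: if_cong)
    ultimately show ?thesis by simp
  qed
  obtain l where l: "complex_eigenvalue M l" "cmod l = spectral_radius M"
    by (rule spectral_radius_attained)
  then obtain v where v: "v \<noteq> 0" "complexify M *v v = l *s v"
    unfolding complex_eigenvalue_def by blast
  then obtain j where j: "v $ j \<noteq> 0"
    by (auto simp: Finite_Cartesian_Product.vec_eq_iff)
  have "(\<lambda>k. \<Sum>m\<in>UNIV. complex_of_real (matpow M k $ j $ m) * v $ m) \<longlonglongrightarrow> 0"
    using tendsto_of_real[OF entry, where 'a = complex]
    by (intro tendsto_null_sum tendsto_mult_left_zero) simp
  moreover have "(\<Sum>m\<in>UNIV. complex_of_real (matpow M k $ j $ m) * v $ m) = l ^ k * v $ j" for k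
    using complexify_matpow_eigenvector[OF v(2), of k]
    by (simp add: matrix_vector_mult_def complexify_def Finite_Cartesian_Product.vec_eq_iff)
  ultimately have "(\<lambda>k. l ^ k * v $ j) \<longlonglongrightarrow> 0" by simp
  then have "(\<lambda>k. l ^ k) \<longlonglongrightarrow> 0"
    using tendsto_mult_right_zero[of _ sequentially "inverse (v $ j)"] j by simp
  then show ?thesis using l(2) power_tendsto_zero_imp_norm_less_one by fastforce
qed

section \<open>Proper cones\<close>

lemma proper_cone_convex_cone:
  assumes "proper_cone K"
  shows "convex_cone K"
proof -
  have "convex K" "cone K" "interior K \<noteq> {}"
    using assms by (simp_all add: proper_cone_def)
  then show ?thesis using interior_subset[of K] by (auto simp: convex_cone_def cone_def conic_def)
qed

lemma convex_cone_sum: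
  assumes "convex_cone K" "\<And>j. j \<in> S \<Longrightarrow> f j \<in> K"
  shows "(\<Sum>j\<in>S. f j) \<in> K"
  using assms(2)
proof (induction S rule: infinite_finite_induct)
  case (insert j S)
  then show ?case by (simp add: convex_cone_add[OF assms(1)])
qed (use assms(1) in \<open>simp_all add: convex_cone_iff\<close>)

lemma proper_cone_generating:
  assumes "proper_cone K"
  obtains x1 x2 where "x1 \<in> K" "x2 \<in> K" "y = x1 - x2"
proof -
  obtain e where e: "e \<in> interior K" using assms unfolding proper_cone_def by blast
  then obtain \<epsilon> where "\<epsilon> > 0" "ball e \<epsilon> \<subseteq> K" using mem_interior by blast
  define t where "t = \<epsilon> / (norm y + 1)"
  have t: "t > 0" using \<open>\<epsilon> > 0\<close> by (simp add: t_def add_nonneg_pos)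
  have "norm (t *\<^sub>R y) < \<epsilon>"
    using \<open>\<epsilon> > 0\<close> by (simp add: t_def divide_less_eq add_nonneg_pos)
  then have "e + t *\<^sub>R y \<in> K" using \<open>ball e \<epsilon> \<subseteq> K\<close> by (auto simp: dist_norm)
  moreover have "e \<in> K" using e interior_subset by blast
  ultimately have "(1 / t) *\<^sub>R (e + t *\<^sub>R y) \<in> K" "(1 / t) *\<^sub>R e \<in> K"
    using t convex_cone_scaleR[OF proper_cone_convex_cone[OF assms]] by simp_all
  moreover have "y = (1 / t) *\<^sub>R (e + t *\<^sub>R y) - (1 / t) *\<^sub>R e"
    using t by (simp add: scaleR_add_right)
  ultimately show ?thesis by (rule that)
qed

lemma proper_cone_sphere_hull_nonzero:
  assumes "proper_cone K"
  shows "0 \<notin> convex hull (K \<inter> sphere 0 1)"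
proof
  assume "0 \<in> convex hull (K \<inter> sphere 0 1)"
  then obtain S u where S: "finite S" "S \<subseteq> K \<inter> sphere 0 1" "\<forall>x\<in>S. 0 \<le> u x" "sum u S = 1"
      "(\<Sum>x\<in>S. u x *\<^sub>R x) = 0"
    unfolding convex_hull_explicit by blast
  obtain x0 where x0: "x0 \<in> S" "u x0 \<noteq> 0"
    using S(4) by (metis sum.neutral zero_neq_one)
  have cone: "convex_cone K" using assms by (rule proper_cone_convex_cone)
  have pos: "u x0 *\<^sub>R x0 \<in> K"
    using x0(1) S(2,3) by (intro convex_cone_scaleR[OF cone]) auto
  have "- (u x0 *\<^sub>R x0) = (\<Sum>x\<in>S - {x0}. u x *\<^sub>R x)"
    using S(5) sum.remove[OF S(1) x0(1), of "\<lambda>x. u x *\<^sub>R x"] by (simp add: neg_eq_iff_add_eq_0)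
  also have "\<dots> \<in> K"
    using S(2,3) by (intro convex_cone_sum[OF cone] convex_cone_scaleR[OF cone]) auto
  finally have "u x0 *\<^sub>R x0 \<in> K \<inter> uminus ` K"
    using pos by (metis IntI image_eqI minus_minus)
  then have "u x0 *\<^sub>R x0 = 0" using assms unfolding proper_cone_def by blast
  then show False using x0 S(2) by auto
qed

lemma proper_cone_coercive_functional:
  assumes "proper_cone K"
  obtains w \<delta> where "\<delta> > 0" "\<And>x. x \<in> K \<Longrightarrow> \<delta> * norm x \<le> inner w x"
proof -
  let ?S = "convex hull (K \<inter> sphere 0 1)"
  have "compact (K \<inter> sphere 0 1)"
    using assms unfolding proper_cone_def by (intro closed_Int_compact) auto
  then have "closed ?S" by (intro compact_imp_closed compact_convex_hull)
  then obtain w \<delta> where "\<delta> > 0" and sep: "\<And>x. x \<in> ?S \<Longrightarrow> inner w x > \<delta>"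
    using separating_hyperplane_closed_0[OF convex_convex_hull]
      proper_cone_sphere_hull_nonzero[OF assms] by blast
  have "\<delta> * norm x \<le> inner w x" if "x \<in> K" for x
  proof (cases "x = 0")
    case False
    have "(1 / norm x) *\<^sub>R x \<in> ?S"
      using \<open>x \<in> K\<close> False convex_cone_scaleR[OF proper_cone_convex_cone[OF assms]]
      by (intro hull_inc) auto
    then have "\<delta> < inner w x / norm x" using sep[of "(1 / norm x) *\<^sub>R x"] by simp
    then have "\<delta> * norm x < inner w x" using False by (simp add: pos_less_divide_eq)
    then show ?thesis by simp
  qed simp
  with \<open>\<delta> > 0\<close> show ?thesis by (rule that)
qed

lemma proper_cone_series_tendsto_zero:
  assumes K: "proper_cone K" and z: "\<And>k. z k \<in> K" and b: "\<And>m. b - (\<Sum>k<m. z k) \<in> K"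
  shows "z \<longlonglongrightarrow> 0"
proof -
  obtain w \<delta> where "\<delta> > 0" and w: "\<And>x. x \<in> K \<Longrightarrow> \<delta> * norm x \<le> inner w x"
    using proper_cone_coercive_functional[OF K] by blast
  have "(\<Sum>k<m. norm (z k)) \<le> inner w b / \<delta>" for m
  proof -
    have "\<delta> * (\<Sum>k<m. norm (z k)) \<le> (\<Sum>k<m. inner w (z k))"
      unfolding sum_distrib_left by (intro sum_mono w z)
    also have "\<dots> \<le> inner w b"
    proof -
      have "0 \<le> inner w (b - (\<Sum>k<m. z k))"
        using w[OF b, of m] \<open>\<delta> > 0\<close> by (meson order_trans less_imp_le mult_nonneg_nonneg norm_ge_zero)
      then show ?thesis by (simp add: inner_sum_right inner_diff_right)
    qed
    finally show ?thesis using \<open>\<delta> > 0\<close> by (simp add: pos_le_divide_eq mult.commute)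
  qed
  then have "summable (\<lambda>k. norm (z k))" by (intro summableI_nonneg_bounded) auto
  then show ?thesis by (rule tendsto_norm_zero_cancel[OF summable_LIMSEQ_zero])
qed

lemma K_nonneg_one: "K_nonneg K (mat 1)"
  by (simp add: K_nonneg_def)

lemma K_nonneg_mult: "K_nonneg K A \<Longrightarrow> K_nonneg K B \<Longrightarrow> K_nonneg K (A ** B)"
  by (simp add: K_nonneg_def matrix_vector_mul_assoc[symmetric])

lemma K_nonneg_add: "proper_cone K \<Longrightarrow> K_nonneg K A \<Longrightarrow> K_nonneg K B \<Longrightarrow> K_nonneg K (A + B)"
  by (simp add: K_nonneg_def matrix_vector_mult_add_rdistrib convex_cone_add proper_cone_convex_cone)

lemma K_nonneg_matpow: "K_nonneg K A \<Longrightarrow> K_nonneg K (matpow A k)"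
  by (induction k) (simp_all add: K_nonneg_one matpow_Suc K_nonneg_mult)

lemma K_nonneg_sum:
  "proper_cone K \<Longrightarrow> (\<And>j. j \<in> S \<Longrightarrow> K_nonneg K (f j)) \<Longrightarrow> K_nonneg K (\<Sum>j\<in>S. f j)"
  by (auto simp: K_nonneg_def sum_matrix_vector_mult intro: convex_cone_sum proper_cone_convex_cone)

section \<open>Splittings\<close>

lemma invertible_one_minus_matpow:
  assumes "spectral_radius M < 1" "0 < s"
  shows "invertible (mat 1 - matpow M s)"
  unfolding invertible_left_inverse matrix_left_invertible_ker
proof (intro allI impI)
  fix x assume "(mat 1 - matpow M s) *v x = 0"
  then have fixed: "matpow M s *v x = x" by (simp add: matrix_vector_mult_diff_rdistrib)
  have "matpow M (k * s) *v x = x" for k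
    by (induction k) (simp_all add: matpow_add matrix_vector_mul_assoc[symmetric] fixed)
  moreover have "(\<lambda>k. matpow M (k * s) *v x) \<longlonglongrightarrow> 0"
  proof -
    have "(\<lambda>k. matpow M k *v x) \<longlonglongrightarrow> 0"
      using assms(1) by (rule matpow_vec_tendsto_zero)
    moreover have "strict_mono (\<lambda>k. k * s)" using assms(2) by (intro strict_monoI) simp
    ultimately have "((\<lambda>k. matpow M k *v x) \<circ> (\<lambda>k. k * s)) \<longlonglongrightarrow> 0"
      by (rule LIMSEQ_subseq_LIMSEQ)
    then show ?thesis by (simp add: comp_def)
  qed
  ultimately show "x = 0" by (simp add: LIMSEQ_const_iff)
qed

lemma invertible_one_minus: "spectral_radius M < 1 \<Longrightarrow> invertible (mat 1 - M)"
  using invertible_one_minus_matpow[of M 1] by (simp add: matpow_Suc)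

lemma K_nonneg_matrix_inv_one_minus:
  assumes K: "proper_cone K" and H: "K_nonneg K H" and sr: "spectral_radius H < 1"
  shows "K_nonneg K (matrix_inv (mat 1 - H))"
  unfolding K_nonneg_def
proof
  fix x assume x: "x \<in> K"
  define W where "W = matrix_inv (mat 1 - H)"
  have "W ** (mat 1 - H) = mat 1"
    unfolding W_def by (rule matrix_inv_left_right(2)[OF invertible_one_minus[OF sr]])
  then have "(\<Sum>k<m. matpow H k) = W ** (mat 1 - matpow H m)" for m
    by (metis one_minus_mult_geometric_sum matrix_mul_assoc matrix_mul_lid)
  then have partial: "(\<Sum>k<m. matpow H k *v x) = W *v x - W *v (matpow H m *v x)" for m
    by (simp add: sum_matrix_vector_mult[symmetric] matrix_vector_mul_assoc[symmetric]
        matrix_vector_mult_diff_rdistrib matrix_vector_mult_diff_distrib)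
  have "(\<lambda>m. W *v x - W *v (matpow H m *v x)) \<longlonglongrightarrow> W *v x - W *v 0"
    using matpow_vec_tendsto_zero[OF sr]
    by (intro tendsto_diff tendsto_const bounded_linear.tendsto[OF matrix_vector_mul_bounded_linear])
  then have "(\<lambda>m. \<Sum>k<m. matpow H k *v x) \<longlonglongrightarrow> W *v x" by (simp add: partial)
  moreover have "(\<Sum>k<m. matpow H k *v x) \<in> K" for m
    using x K_nonneg_matpow[OF H]
    by (intro convex_cone_sum[OF proper_cone_convex_cone[OF K]]) (simp add: K_nonneg_def)
  ultimately show "matrix_inv (mat 1 - H) *v x \<in> K"
    using K unfolding proper_cone_def W_def by (metis closed_sequentially)
qed

lemma K_regular_splitting_inverse_nonneg:
  assumes K: "proper_cone K" and split: "K_regular_splitting K A U V"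
    and conv: "convergent_splitting U V"
  shows "K_nonneg K (matrix_inv A)"
proof -
  define H where "H = matrix_inv U ** V"
  define W where "W = matrix_inv (mat 1 - H)"
  have U: "A = U - V" "invertible U" "K_nonneg K (matrix_inv U)" "K_nonneg K V"
    using split by (simp_all add: K_regular_splitting_def)
  have sr: "spectral_radius H < 1" using conv by (simp add: convergent_splitting_def H_def)
  have "A = U ** (mat 1 - H)"
    using U(1) by (simp add: H_def matrix_diff_ldistrib matrix_mul_assoc matrix_inv_left_right[OF U(2)])
  also have "\<dots> ** (W ** matrix_inv U) = U ** (((mat 1 - H) ** W) ** matrix_inv U)"
    by (simp only: matrix_mul_assoc)
  also have "\<dots> = mat 1"
    by (simp add: W_def matrix_inv_left_right invertible_one_minus[OF sr] U(2))
  finally have "matrix_inv A = W ** matrix_inv U" by (rule matrix_inv_unique)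
  moreover have "K_nonneg K W"
    unfolding W_def H_def using K U(3,4) sr[unfolded H_def]
    by (intro K_nonneg_matrix_inv_one_minus K_nonneg_mult)
  ultimately show ?thesis using U(3) by (simp add: K_nonneg_mult)
qed

lemma K_weak_regular_splitting_II_convergent:
  assumes K: "proper_cone K" and split: "K_weak_regular_splitting_II K A M N"
    and A: "invertible A" and A_inv: "K_nonneg K (matrix_inv A)"
  shows "convergent_splitting M N"
proof -
  define Mi where "Mi = matrix_inv M"
  define Ai where "Ai = matrix_inv A"
  define B where "B = N ** Mi"
  have M: "N = M - A" "invertible M" "K_nonneg K Mi" "K_nonneg K B"
    using split by (auto simp: K_weak_regular_splitting_II_def Mi_def B_def)
  have "B = mat 1 - A ** Mi"
    using M(1) by (simp add: B_def Mi_def matrix_diff_rdistrib matrix_inv_left_right[OF M(2)])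
  then have AiB: "Ai ** B = Ai - Mi"
    by (simp add: matrix_diff_ldistrib matrix_mul_assoc Ai_def matrix_inv_left_right[OF A])
  have partial: "(\<Sum>k<m. Mi ** matpow B k) = Ai - Ai ** matpow B m" for m
  proof -
    have "Mi ** matpow B k = Ai ** matpow B k - Ai ** matpow B (Suc k)" for k
      using AiB by (simp add: matpow_Suc matrix_mul_assoc matrix_diff_rdistrib)
    then show ?thesis by (simp add: sum_lessThan_telescope'[where f = "\<lambda>k. Ai ** matpow B k"])
  qed
  have on_cone: "(\<lambda>k. matpow (Mi ** N) k *v (Mi *v x)) \<longlonglongrightarrow> 0" if x: "x \<in> K" for x
  proof -
    have "(\<lambda>k. Mi *v (matpow B k *v x)) \<longlonglongrightarrow> 0"
    proof (rule proper_cone_series_tendsto_zero[OF K])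
      show "Mi *v (matpow B k *v x) \<in> K" for k
        using x M(3) K_nonneg_matpow[OF M(4)] by (simp add: K_nonneg_def)
      have "Ai *v x - (\<Sum>k<m. Mi *v (matpow B k *v x)) = Ai *v (matpow B m *v x)" for m
        using partial[of m]
        by (simp add: matrix_vector_mul_assoc sum_matrix_vector_mult[symmetric]
            matrix_vector_mult_diff_rdistrib)
      then show "Ai *v x - (\<Sum>k<m. Mi *v (matpow B k *v x)) \<in> K" for m
        using x A_inv K_nonneg_matpow[OF M(4)] by (simp add: K_nonneg_def Ai_def)
    qed
    then show ?thesis
      by (simp add: B_def matrix_vector_mul_assoc matpow_mult_shift)
  qed
  have "(\<lambda>k. matpow (Mi ** N) k *v y) \<longlonglongrightarrow> 0" for y
  proof -
    obtain x1 x2 where x: "x1 \<in> K" "x2 \<in> K" "M *v y = x1 - x2"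
      using proper_cone_generating[OF K] by blast
    then have "y = Mi *v x1 - Mi *v x2"
      by (metis Mi_def matrix_inv_left_right(2)[OF M(2)] matrix_vector_mul_assoc
          matrix_vector_mul_lid matrix_vector_mult_diff_distrib)
    then show ?thesis
      using tendsto_diff[OF on_cone[OF x(1)] on_cone[OF x(2)]]
      by (simp add: matrix_vector_mult_diff_distrib)
  qed
  then show ?thesis
    unfolding convergent_splitting_def Mi_def[symmetric] by (rule spectral_radius_less_oneI)
qed

lemma convergent_splitting_matrix_inv:
  assumes "invertible R"
  shows "convergent_splitting (matrix_inv R) (matrix_inv R - A) \<longleftrightarrow>
    spectral_radius (mat 1 - R ** A) < 1"
  by (simp add: convergent_splitting_def matrix_inv_matrix_inv[OF assms] matrix_diff_ldistrib
      matrix_inv_left_right[OF assms])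

lemma affine_iteration_tendsto:
  assumes sr: "spectral_radius T < 1" and fixed: "T *v z + c = z"
  shows "(\<lambda>k. ((\<lambda>x. T *v x + c) ^^ k) x0) \<longlonglongrightarrow> z"
proof -
  have iter: "((\<lambda>x. T *v x + c) ^^ k) x0 = z + matpow T k *v (x0 - z)" for k
  proof (induction k)
    case (Suc k)
    have "T *v (z + matpow T k *v (x0 - z)) + c = (T *v z + c) + T *v (matpow T k *v (x0 - z))"
      by (simp add: matrix_vector_right_distrib)
    then show ?case
      using Suc by (simp add: fixed matpow_Suc matrix_vector_mul_assoc)
  qed simp
  have "(\<lambda>k. z + matpow T k *v (x0 - z)) \<longlonglongrightarrow> z + 0"
    using matpow_vec_tendsto_zero[OF sr] by (intro tendsto_add tendsto_const)
  then show ?thesis by (simp add: iter)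
qed

section \<open>The two-stage method\<close>

definition two_stage_R :: "real^'n^'n \<Rightarrow> real^'n^'n \<Rightarrow> nat \<Rightarrow> real^'n^'n" where
  "two_stage_R F G s = (\<Sum>j<s. matpow (matrix_inv F ** G) j ** matrix_inv F)"

lemma two_stage_c_eq: "two_stage_c F G s b = two_stage_R F G s *v b"
  by (simp add: two_stage_c_def two_stage_R_def sum_matrix_vector_mult)

lemma two_stage_R_alt: "two_stage_R F G s = (\<Sum>j<s. matrix_inv F ** matpow (G ** matrix_inv F) j)"
  by (simp add: two_stage_R_def matpow_mult_shift)

lemma two_stage_R_mult:
  assumes "invertible F"
  shows "two_stage_R F G s ** (F - G) = mat 1 - matpow (matrix_inv F ** G) s"
proof -
  let ?P = "matrix_inv F ** G"
  have "matpow ?P j ** matrix_inv F ** (F - G) = matpow ?P j - matpow ?P (Suc j)" for j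
    by (simp add: matrix_diff_ldistrib matrix_mul_assoc[symmetric] matrix_inv_left_right[OF assms]
        matpow_Suc')
  then have "two_stage_R F G s ** (F - G) = (\<Sum>j<s. matpow ?P j - matpow ?P (Suc j))"
    unfolding two_stage_R_def sum_matrix_mult by presburger
  then show ?thesis by (simp add: sum_lessThan_telescope')
qed

lemma mult_two_stage_R:
  assumes "invertible F"
  shows "(F - G) ** two_stage_R F G s = mat 1 - matpow (G ** matrix_inv F) s"
proof -
  let ?Q = "G ** matrix_inv F"
  have "(F - G) ** (matrix_inv F ** matpow ?Q j) = matpow ?Q j - matpow ?Q (Suc j)" for j
    by (simp add: matrix_diff_rdistrib matrix_mul_assoc matrix_inv_left_right[OF assms] matpow_Suc)
  then have "(F - G) ** two_stage_R F G s = (\<Sum>j<s. matpow ?Q j - matpow ?Q (Suc j))"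
    unfolding two_stage_R_alt matrix_mult_sum by presburger
  then show ?thesis by (simp add: sum_lessThan_telescope')
qed

lemma two_stage_T_eq:
  assumes "invertible F"
  shows "two_stage_T F G V s = mat 1 - two_stage_R F G s ** (F - G - V)"
proof -
  have "two_stage_T F G V s = matpow (matrix_inv F ** G) s + two_stage_R F G s ** V"
    unfolding two_stage_T_def two_stage_R_def sum_matrix_mult ..
  moreover have "two_stage_R F G s ** (F - G - V) = two_stage_R F G s ** (F - G) - two_stage_R F G s ** V"
    by (rule matrix_diff_ldistrib)
  ultimately show ?thesis by (simp add: two_stage_R_mult[OF assms])
qed

lemma K_nonneg_two_stage_R:
  assumes "proper_cone K" "K_nonneg K (matrix_inv F)" "K_nonneg K (G ** matrix_inv F)"
  shows "K_nonneg K (two_stage_R F G s)"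
  unfolding two_stage_R_alt
  by (intro K_nonneg_sum[OF assms(1)] K_nonneg_mult[OF assms(2) K_nonneg_matpow[OF assms(3)]])

lemma invertible_two_stage_R:
  assumes "invertible F" "invertible (F - G)" "spectral_radius (matrix_inv F ** G) < 1" "0 < s"
  shows "invertible (two_stage_R F G s)"
proof -
  have "two_stage_R F G s = (two_stage_R F G s ** (F - G)) ** matrix_inv (F - G)"
    by (simp add: matrix_mul_assoc[symmetric] matrix_inv_left_right[OF assms(2)])
  also have "\<dots> = (mat 1 - matpow (matrix_inv F ** G) s) ** matrix_inv (F - G)"
    by (simp add: two_stage_R_mult[OF assms(1)])
  finally show ?thesis
    using invertible_mult[OF invertible_one_minus_matpow[OF assms(3,4)]
        invertible_matrix_inv[OF assms(2)]] by simp
qed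

lemma two_stage_weak_regular_splitting:
  assumes K: "proper_cone K" and outer: "K_regular_splitting K A U V"
    and inner: "K_weak_regular_splitting_II K U F G" and conv: "convergent_splitting F G"
    and s: "0 < s"
  defines "R \<equiv> two_stage_R F G s"
  shows "K_weak_regular_splitting_II K A (matrix_inv R) (matrix_inv R - A)"
proof -
  have A: "A = U - V" "invertible U" "K_nonneg K V"
    using outer by (simp_all add: K_regular_splitting_def)
  have U: "U = F - G" "invertible F" "K_nonneg K (matrix_inv F)" "K_nonneg K (G ** matrix_inv F)"
    using inner by (simp_all add: K_weak_regular_splitting_II_def)
  have R: "invertible R"
    using U A(2) conv s unfolding R_def convergent_splitting_def
    by (intro invertible_two_stage_R) simp_all
  have "(matrix_inv R - A) ** R = matpow (G ** matrix_inv F) s + V ** R"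
    using mult_two_stage_R[OF U(2), of G s]
    by (simp add: R_def[symmetric] A(1) U(1) matrix_diff_rdistrib matrix_inv_left_right[OF R])
  moreover have "K_nonneg K (matpow (G ** matrix_inv F) s + V ** R)"
    unfolding R_def
    by (intro K_nonneg_add[OF K] K_nonneg_matpow[OF U(4)] K_nonneg_mult[OF A(3)]
        K_nonneg_two_stage_R[OF K U(3,4)])
  ultimately show ?thesis
    using R K_nonneg_two_stage_R[OF K U(3,4)]
    by (simp add: K_weak_regular_splitting_II_def invertible_matrix_inv matrix_inv_matrix_inv R_def)
qed

theorem theorem3p3:
  fixes K :: "(real^'n) set" and A U V F G :: "real^'n^'n"
  assumes "proper_cone K"
    and "invertible A"
    and "K_regular_splitting K A U V" and "convergent_splitting U V"
    and "K_weak_regular_splitting_II K U F G" and "convergent_splitting F G"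
    and "V ** matrix_inv F ** G = G ** matrix_inv F ** V"
  shows "\<forall>s\<ge>1. spectral_radius (two_stage_T F G V s) < 1 \<and>
           (\<forall>b x0. (\<lambda>k. two_stage_iter F G V s b x0 k) \<longlonglongrightarrow> matrix_inv A *v b)"
proof (intro allI impI conjI)
  fix s :: nat assume "s \<ge> 1"
  define R where "R = two_stage_R F G s"
  have F: "invertible F" "invertible (F - G)" and A: "A = F - G - V"
    using assms(3,5) by (simp_all add: K_regular_splitting_def K_weak_regular_splitting_II_def)
  have R: "invertible R"
    unfolding R_def using F assms(6) \<open>s \<ge> 1\<close>
    by (intro invertible_two_stage_R) (simp_all add: convergent_splitting_def)
  have T: "two_stage_T F G V s = mat 1 - R ** A"
    using two_stage_T_eq[OF F(1)] A by (simp add: R_def)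
  have "convergent_splitting (matrix_inv R) (matrix_inv R - A)"
    unfolding R_def
    by (rule K_weak_regular_splitting_II_convergent[OF assms(1)
          two_stage_weak_regular_splitting[OF assms(1,3,5,6)] assms(2)
          K_regular_splitting_inverse_nonneg[OF assms(1,3,4)]])
      (use \<open>s \<ge> 1\<close> in simp)
  then show sr: "spectral_radius (two_stage_T F G V s) < 1"
    by (simp add: convergent_splitting_matrix_inv[OF R] T)
  fix b x0
  have "A *v (matrix_inv A *v b) = b"
    by (simp add: matrix_vector_mul_assoc matrix_inv_left_right[OF assms(2)])
  then have "two_stage_T F G V s *v (matrix_inv A *v b) + R *v b = matrix_inv A *v b"
    by (simp add: T matrix_vector_mult_diff_rdistrib matrix_vector_mul_assoc[symmetric])
  then show "(\<lambda>k. two_stage_iter F G V s b x0 k) \<longlonglongrightarrow> matrix_inv A *v b"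
    unfolding two_stage_iter_def two_stage_c_eq R_def[symmetric]
    by (rule affine_iteration_tendsto[OF sr])
qed

end
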